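(* Let $R=\mathbb{Z}$ or $\mathbb{Z}[i]$, let $A_0=(a_1|a_2)\in R^{4\times2}$ be a $2$-icube of norm $\lambda$, and let $\Lambda=\{w\in R^4: a_1^*w=a_2^*w=0\}$. Then for all $x,y\in\Lambda$, $\lambda$ divides $|d_2(A_0)|^2\,y^*x$ in $R$.
   Context: A $2$-icube of norm $\lambda>0$ is $(a_1|a_2)$ with $a_1^*a_1=a_2^*a_2=\lambda$, $a_1^*a_2=0$. $d_2(A_0)$ is the gcd of the $2\times2$ minors of $A_0$ (defined up to a unit). *)

theory Defs
  imports "HOL-Analysis.Analysis"
begin

text \<open>Both rings R = Z and R = Z[i] are realised as subrings of the complex numbers.\<close>

definition ZZ_ring :: "complex set" where
  "ZZ_ring = {z. Re z \<in> \<int> \<and> Im z = 0}"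

definition gauss_ring :: "complex set" where
  "gauss_ring = {z. Re z \<in> \<int> \<and> Im z \<in> \<int>}"

definition rdvd :: "complex set \<Rightarrow> complex \<Rightarrow> complex \<Rightarrow> bool" where
  "rdvd R a b \<longleftrightarrow> (\<exists>q\<in>R. b = a * q)"

definition is_gcd_in :: "complex set \<Rightarrow> complex set \<Rightarrow> complex \<Rightarrow> bool" where
  "is_gcd_in R S d \<longleftrightarrow> d \<in> R \<and> (\<forall>s\<in>S. rdvd R d s) \<and>
     (\<forall>e\<in>R. (\<forall>s\<in>S. rdvd R e s) \<longrightarrow> rdvd R e d)"

definition hprod :: "complex ^ 'n \<Rightarrow> complex ^ 'n \<Rightarrow> complex" where
  "hprod y x = (\<Sum>i\<in>UNIV. cnj (y $ i) * x $ i)"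

definition icube2 :: "real \<Rightarrow> complex ^ 'n \<Rightarrow> complex ^ 'n \<Rightarrow> bool" where
  "icube2 lam a1 a2 \<longleftrightarrow> lam > 0 \<and> hprod a1 a1 = complex_of_real lam \<and>
     hprod a2 a2 = complex_of_real lam \<and> hprod a1 a2 = 0"

definition minors2 :: "complex ^ 4 \<Rightarrow> complex ^ 4 \<Rightarrow> complex set" where
  "minors2 a1 a2 = {a1 $ i * a2 $ j - a1 $ j * a2 $ i | i j. i < j}"

end

theory Submission
  imports Defs
begin

(* R is Euclidean for the norm |z|^2 (round the exact quotient), so the gcd d of the
   2x2 minors of A = (a1|a2) is an R-linear combination of them, and it suffices that lambda
   divides m * cnj m' * y^*x for any two minors m, m'.  By Cauchy-Binet, m * cnj m' is a 2x2
   minor of A A^* = lambda I - M, where M is lambda times the orthogonal projection onto the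
   complement of the columns of A.  That complement is 2-dimensional and contains x and y, so the
   second exterior power of M, multiplied by y^*x, equals lambda times the mixed exterior product
   of M with x y^*.  Expanding the minor of lambda I - M, every term is then a multiple of lambda
   with cofactor in R. *)

definition minor :: "('i \<Rightarrow> 'a::comm_ring) \<Rightarrow> ('i \<Rightarrow> 'a) \<Rightarrow> 'i \<Rightarrow> 'i \<Rightarrow> 'a" where
  "minor u v a b = u a * v b - u b * v a"

definition minor2 :: "('i \<Rightarrow> 'j \<Rightarrow> 'a::comm_ring) \<Rightarrow> 'i \<Rightarrow> 'i \<Rightarrow> 'j \<Rightarrow> 'j \<Rightarrow> 'a" where
  "minor2 K a b e f = K a e * K b f - K a f * K b e"

definition mixed_minor2 ::
    "('i \<Rightarrow> 'j \<Rightarrow> 'a::comm_ring) \<Rightarrow> ('i \<Rightarrow> 'j \<Rightarrow> 'a) \<Rightarrow> 'i \<Rightarrow> 'i \<Rightarrow> 'j \<Rightarrow> 'j \<Rightarrow> 'a" where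
  "mixed_minor2 K L a b e f = K a e * L b f + L a e * K b f - K a f * L b e - L a f * K b e"

lemma minor_mult_minor:
  "minor a1 a2 a b * minor b1 b2 e f = minor2 (\<lambda>i j. a1 i * b1 j + a2 i * b2 j) a b e f"
  unfolding minor_def minor2_def by (simp add: algebra_simps)

lemma minor2_swap_rows: "minor2 K b a e f = - minor2 K a b e f"
  and minor2_swap_cols: "minor2 K a b f e = - minor2 K a b e f"
  and minor2_same_rows: "minor2 K a a e f = 0"
  and minor2_same_cols: "minor2 K a b e e = 0"
  unfolding minor2_def by (simp_all add: algebra_simps)

lemma mixed_minor2_swap_rows: "mixed_minor2 K L b a e f = - mixed_minor2 K L a b e f"
  and mixed_minor2_swap_cols: "mixed_minor2 K L a b f e = - mixed_minor2 K L a b e f"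
  and mixed_minor2_same_rows: "mixed_minor2 K L a a e f = 0"
  and mixed_minor2_same_cols: "mixed_minor2 K L a b e e = 0"
  unfolding mixed_minor2_def by (simp_all add: algebra_simps)

(* lambda (I - P) for the projection P = (a1 b1^T + a2 b2^T) / lambda; with b_k = cnj a_k and
   A^*A = lambda I it is lambda times the orthogonal projection onto the complement of the columns. *)
definition compl_proj ::
    "'a::comm_ring_1 \<Rightarrow> ('i \<Rightarrow> 'a) \<Rightarrow> ('i \<Rightarrow> 'a) \<Rightarrow> ('i \<Rightarrow> 'a) \<Rightarrow> ('i \<Rightarrow> 'a) \<Rightarrow> 'i \<Rightarrow> 'i \<Rightarrow> 'a" where
  "compl_proj l a1 b1 a2 b2 i j = (if i = j then l else 0) - (a1 i * b1 j + a2 i * b2 j)"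

lemma minor2_scale_diff:
  "minor2 (\<lambda>i j. c * K i j - L i j) a b e f
     = c * c * minor2 K a b e f - c * mixed_minor2 K L a b e f + minor2 L a b e f"
  unfolding minor2_def mixed_minor2_def by (simp add: algebra_simps)

lemma four_neq: "(1::4) \<noteq> 2" "(1::4) \<noteq> 3" "(1::4) \<noteq> 4" "(2::4) \<noteq> 3" "(2::4) \<noteq> 4" "(3::4) \<noteq> 4"
  by simp_all

lemma neq_4_pairs:
  "(a::4) \<noteq> b \<Longrightarrow> (a, b) \<in> {(1, 2), (1, 3), (1, 4), (2, 3), (2, 4), (3, 4)}
    \<or> (b, a) \<in> {(1, 2), (1, 3), (1, 4), (2, 3), (2, 4), (3, 4)}"
  using exhaust_4[of a] exhaust_4[of b] by fastforce

locale biorthogonal_4 =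
  fixes a1 a2 b1 b2 x z :: "4 \<Rightarrow> 'a::idom" and l :: 'a
  assumes x_perp: "(\<Sum>i\<in>UNIV. b1 i * x i) = 0" "(\<Sum>i\<in>UNIV. b2 i * x i) = 0"
    and z_perp: "(\<Sum>i\<in>UNIV. a1 i * z i) = 0" "(\<Sum>i\<in>UNIV. a2 i * z i) = 0"
    and biorth: "(\<Sum>i\<in>UNIV. b1 i * a1 i) = l" "(\<Sum>i\<in>UNIV. b2 i * a2 i) = l"
      "(\<Sum>i\<in>UNIV. b1 i * a2 i) = 0" "(\<Sum>i\<in>UNIV. a1 i * b2 i) = 0"
begin

(* With M = compl_proj l a1 b1 a2 b2 and t = z^T x: M / l is an idempotent of rank 4 - 2 = 2
   (this is where the dimension enters) whose image V contains x and whose row space contains z^T.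
   Hence x z^T restricts to an endomorphism of V of trace t, and on the line Lambda^2 V both sides
   act as l^2 t, while both vanish on a complement. *)
lemma trace_mult_minor2_compl_proj_pairs:
  "\<forall>p\<in>{(1, 2), (1, 3), (1, 4), (2, 3), (2, 4), (3, 4)}.
   \<forall>q\<in>{(1, 2), (1, 3), (1, 4), (2, 3), (2, 4), (3, 4)}.
     (\<Sum>i\<in>UNIV. z i * x i) * minor2 (compl_proj l a1 b1 a2 b2) (fst p) (snd p) (fst q) (snd q)
       = l * mixed_minor2 (compl_proj l a1 b1 a2 b2) (\<lambda>i j. x i * z j) (fst p) (snd p) (fst q) (snd q)"
  apply (simp only: ball_simps fst_conv snd_conv simp_thms)
  apply (intro conjI)
  by (simp only: minor2_def mixed_minor2_def compl_proj_def four_neq four_neq[symmetric]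
        simp_thms if_True if_False sum_4;
      use x_perp[unfolded sum_4] z_perp[unfolded sum_4] biorth[unfolded sum_4] in algebra)+

lemma trace_mult_minor2_compl_proj:
  "(\<Sum>i\<in>UNIV. z i * x i) * minor2 (compl_proj l a1 b1 a2 b2) a b e f
     = l * mixed_minor2 (compl_proj l a1 b1 a2 b2) (\<lambda>i j. x i * z j) a b e f"
proof -
  define P where "P a b e f \<longleftrightarrow> (\<Sum>i\<in>UNIV. z i * x i) * minor2 (compl_proj l a1 b1 a2 b2) a b e f
       = l * mixed_minor2 (compl_proj l a1 b1 a2 b2) (\<lambda>i j. x i * z j) a b e f" for a b e f
  let ?pairs = "{(1, 2), (1, 3), (1, 4), (2, 3), (2, 4), (3, 4)} :: (4 \<times> 4) set"
  have pairs: "P a b e f" if "(a, b) \<in> ?pairs" "(e, f) \<in> ?pairs" for a b e f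
    using bspec[OF bspec[OF trace_mult_minor2_compl_proj_pairs that(1)] that(2)]
    unfolding P_def fst_conv snd_conv .
  have swap: "P b a e f \<longleftrightarrow> P a b e f" "P a b f e \<longleftrightarrow> P a b e f" for a b e f
    unfolding P_def minor2_swap_rows[of _ b a] minor2_swap_cols[of _ a b f e]
      mixed_minor2_swap_rows[of _ _ b a] mixed_minor2_swap_cols[of _ _ a b f e]
    by (simp_all only: mult_minus_right neg_equal_iff_equal)
  have same: "P a a e f" "P a b e e" for a b e f
    unfolding P_def minor2_same_rows minor2_same_cols mixed_minor2_same_rows mixed_minor2_same_cols
    by simp_all
  have "P a b e f"
  proof (cases "a = b \<or> e = f")
    case True
    then show ?thesis
      using same by blast
  next
    case False
    then have "a \<noteq> b" "e \<noteq> f"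
      by auto
    from neq_4_pairs[OF this(1)] neq_4_pairs[OF this(2)] show ?thesis
      using pairs swap by metis
  qed
  then show ?thesis
    unfolding P_def .
qed

lemma minor_mult_minor_mult_trace:
  defines "t \<equiv> \<Sum>i\<in>UNIV. z i * x i"
    and "M \<equiv> compl_proj l a1 b1 a2 b2"
    and "\<delta> \<equiv> \<lambda>i j. if i = j then 1 else 0"
  shows "minor a1 a2 a b * minor b1 b2 e f * t
       = l * (l * t * minor2 \<delta> a b e f - t * mixed_minor2 \<delta> M a b e f
              + mixed_minor2 M (\<lambda>i j. x i * z j) a b e f)"
proof -
  have "(\<lambda>i j. a1 i * b1 j + a2 i * b2 j) = (\<lambda>i j. l * \<delta> i j - M i j)"
    unfolding M_def \<delta>_def compl_proj_def by (simp add: fun_eq_iff)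
  then have "minor a1 a2 a b * minor b1 b2 e f * t
      = (l * l * minor2 \<delta> a b e f - l * mixed_minor2 \<delta> M a b e f + minor2 M a b e f) * t"
    by (simp only: minor_mult_minor minor2_scale_diff)
  also have "\<dots> = l * (l * t * minor2 \<delta> a b e f - t * mixed_minor2 \<delta> M a b e f) + t * minor2 M a b e f"
    by (simp add: algebra_simps)
  also have "t * minor2 M a b e f = l * mixed_minor2 M (\<lambda>i j. x i * z j) a b e f"
    unfolding t_def M_def by (rule trace_mult_minor2_compl_proj)
  finally show ?thesis
    by (simp add: algebra_simps)
qed

end

definition int_or_gauss :: "complex set \<Rightarrow> bool" where
  "int_or_gauss R \<longleftrightarrow> R = ZZ_ring \<or> R = gauss_ring"

definition rspan :: "complex set \<Rightarrow> complex set \<Rightarrow> complex set" where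
  "rspan R S = {\<Sum>s\<in>S. c s * s | c. \<forall>s. c s \<in> R}"

context
  fixes R :: "complex set"
  assumes R: "int_or_gauss R"
begin

lemma int_or_gauss_Re_Im: "z \<in> R \<Longrightarrow> Re z \<in> \<int> \<and> Im z \<in> \<int>"
  using R unfolding int_or_gauss_def ZZ_ring_def gauss_ring_def by auto

lemma int_or_gauss_closed [simp]:
  "0 \<in> R" "1 \<in> R"
  "x \<in> R \<Longrightarrow> y \<in> R \<Longrightarrow> x + y \<in> R"
  "x \<in> R \<Longrightarrow> y \<in> R \<Longrightarrow> x - y \<in> R"
  "x \<in> R \<Longrightarrow> y \<in> R \<Longrightarrow> x * y \<in> R"
  "x \<in> R \<Longrightarrow> cnj x \<in> R"
  using R unfolding int_or_gauss_def ZZ_ring_def gauss_ring_def by auto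

lemma int_or_gauss_sum [simp]: "(\<And>k. k \<in> K \<Longrightarrow> f k \<in> R) \<Longrightarrow> sum f K \<in> R"
  by (induction K rule: infinite_finite_induct) auto

lemma norm_square_in_Nats: "z \<in> R \<Longrightarrow> (cmod z)\<^sup>2 \<in> \<nat>"
proof -
  assume "z \<in> R"
  then obtain a b where "Re z = of_int a" "Im z = of_int b"
    using int_or_gauss_Re_Im[OF \<open>z \<in> R\<close>] by (auto elim!: Ints_cases)
  then have "(cmod z)\<^sup>2 = of_int (a\<^sup>2 + b\<^sup>2)"
    by (simp add: cmod_power2)
  also have "\<dots> = of_nat (nat (a\<^sup>2 + b\<^sup>2))"
    by simp
  finally show ?thesis
    by (simp only: of_nat_in_Nats)
qed

(* Rounding both coordinates of the exact quotient leaves an error of norm at most 1/sqrt 2;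
   for ZZ_ring the quotient is real, so the rounded value stays real. *)
lemma euclidean_division:
  assumes "z \<in> R" "g \<in> R" "g \<noteq> 0"
  shows "\<exists>q\<in>R. (cmod (z - q * g))\<^sup>2 < (cmod g)\<^sup>2"
proof -
  define w where "w = z / g"
  define q where "q = Complex (of_int (round (Re w))) (of_int (round (Im w)))"
  have "q \<in> R"
    using R assms unfolding int_or_gauss_def ZZ_ring_def gauss_ring_def q_def w_def
    by (auto simp: Im_divide)
  have "\<bar>Re w - Re q\<bar> \<le> 1/2" "\<bar>Im w - Im q\<bar> \<le> 1/2"
    using of_int_round_abs_le[of "Re w"] of_int_round_abs_le[of "Im w"] unfolding q_def
    by (simp_all add: abs_minus_commute)
  then have "\<bar>Re w - Re q\<bar>\<^sup>2 \<le> (1/2)\<^sup>2" "\<bar>Im w - Im q\<bar>\<^sup>2 \<le> (1/2)\<^sup>2"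
    by (simp_all only: power_mono abs_ge_zero)
  then have "(cmod (w - q))\<^sup>2 \<le> 1/2"
    by (simp add: cmod_power2 power_divide)
  have "z - q * g = g * (w - q)"
    using assms(3) unfolding w_def by (simp add: algebra_simps)
  then have "(cmod (z - q * g))\<^sup>2 = (cmod g)\<^sup>2 * (cmod (w - q))\<^sup>2"
    by (simp add: norm_mult power_mult_distrib)
  also have "\<dots> \<le> (cmod g)\<^sup>2 * (1/2)"
    using \<open>(cmod (w - q))\<^sup>2 \<le> 1/2\<close> by (intro mult_left_mono) auto
  also have "\<dots> < (cmod g)\<^sup>2"
    using assms(3) by simp
  finally show ?thesis
    using \<open>q \<in> R\<close> by blast
qed

lemma rdvd_mult_left: "c \<in> R \<Longrightarrow> rdvd R a b \<Longrightarrow> rdvd R a (c * b)"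
  unfolding rdvd_def by (metis int_or_gauss_closed(5) mult.left_commute)

lemma rdvd_sum: "(\<And>k. k \<in> K \<Longrightarrow> rdvd R a (f k)) \<Longrightarrow> rdvd R a (sum f K)"
proof (induction K rule: infinite_finite_induct)
  case (insert k K)
  then have "rdvd R a (f k)" "rdvd R a (sum f K)"
    by auto
  then obtain q q' where "q \<in> R" "f k = a * q" "q' \<in> R" "sum f K = a * q'"
    unfolding rdvd_def by blast
  then show ?case
    using insert.hyps unfolding rdvd_def by (intro bexI[of _ "q + q'"]) (simp_all add: distrib_left)
qed (auto simp: rdvd_def intro!: bexI[of _ 0])

lemma rspan_subset: "S \<subseteq> R \<Longrightarrow> rspan R S \<subseteq> R"
  unfolding rspan_def by (auto intro!: int_or_gauss_sum)

lemma in_rspan: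
  assumes "finite S" "s \<in> S"
  shows "s \<in> rspan R S"
proof -
  have "(\<Sum>t\<in>S. (if t = s then 1 else 0) * t) = (\<Sum>t\<in>S. if t = s then s else 0)"
    by (rule sum.cong) auto
  also have "\<dots> = s"
    using assms by simp
  finally show ?thesis
    unfolding rspan_def by (intro CollectI exI[of _ "\<lambda>t. if t = s then 1 else 0"]) auto
qed

lemma rspan_diff:
  assumes "z \<in> rspan R S" "w \<in> rspan R S"
  shows "z - w \<in> rspan R S"
proof -
  obtain c c' where "\<forall>s. c s \<in> R" "z = (\<Sum>s\<in>S. c s * s)" "\<forall>s. c' s \<in> R" "w = (\<Sum>s\<in>S. c' s * s)"
    using assms unfolding rspan_def by auto
  then show ?thesis
    unfolding rspan_def
    by (intro CollectI exI[of _ "\<lambda>s. c s - c' s"]) (auto simp: left_diff_distrib sum_subtractf)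
qed

lemma rspan_mult:
  assumes "z \<in> rspan R S" "u \<in> R"
  shows "u * z \<in> rspan R S"
proof -
  obtain c where "\<forall>s. c s \<in> R" "z = (\<Sum>s\<in>S. c s * s)"
    using assms unfolding rspan_def by auto
  then show ?thesis
    unfolding rspan_def using assms(2)
    by (intro CollectI exI[of _ "\<lambda>s. u * c s"]) (auto simp: sum_distrib_left mult.assoc)
qed

lemma rspan_common_divisor:
  assumes "finite S" "S \<subseteq> R"
  shows "\<exists>g\<in>rspan R S. \<forall>s\<in>S. rdvd R g s"
proof (cases "S \<subseteq> {0}")
  case True
  have "0 \<in> rspan R S"
    unfolding rspan_def by (intro CollectI exI[of _ "\<lambda>_. 0"]) simp
  with True show ?thesis
    unfolding rdvd_def by (auto intro!: bexI[of _ 0])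
next
  case False
  then obtain s0 where "s0 \<in> S" "s0 \<noteq> 0"
    by auto
  define norm_nat :: "complex \<Rightarrow> nat" where "norm_nat z = nat \<lfloor>(cmod z)\<^sup>2\<rfloor>" for z
  have norm_nat_less: "norm_nat r < norm_nat g"
    if rg: "r \<in> R" "g \<in> R" and less: "(cmod r)\<^sup>2 < (cmod g)\<^sup>2" for r g
  proof -
    obtain m n where "(cmod r)\<^sup>2 = of_nat m" "(cmod g)\<^sup>2 = of_nat n"
      using norm_square_in_Nats rg by (metis Nats_cases)
    with less show ?thesis
      unfolding norm_nat_def by simp
  qed
  obtain g where g: "g \<in> rspan R S" "g \<noteq> 0"
    and g_min: "\<And>z. z \<in> rspan R S \<Longrightarrow> z \<noteq> 0 \<Longrightarrow> norm_nat g \<le> norm_nat z"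
    using ex_has_least_nat[of "\<lambda>z. z \<in> rspan R S \<and> z \<noteq> 0" s0 norm_nat]
      in_rspan[OF assms(1) \<open>s0 \<in> S\<close>] \<open>s0 \<noteq> 0\<close> by blast
  have "g \<in> R"
    using g(1) rspan_subset[OF assms(2)] by blast
  have "rdvd R g s" if "s \<in> S" for s
  proof -
    have "s \<in> R"
      using that assms(2) by blast
    then obtain q where "q \<in> R" and q: "(cmod (s - q * g))\<^sup>2 < (cmod g)\<^sup>2"
      using euclidean_division \<open>g \<in> R\<close> g(2) by blast
    have "s - q * g \<in> rspan R S"
      using rspan_diff rspan_mult in_rspan[OF assms(1) that] g(1) \<open>q \<in> R\<close> by blast
    moreover have "norm_nat (s - q * g) < norm_nat g"
      using norm_nat_less q \<open>s \<in> R\<close> \<open>q \<in> R\<close> \<open>g \<in> R\<close> by simp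
    ultimately have "s = g * q"
      using g_min by (metis not_le right_minus_eq mult.commute)
    then show ?thesis
      unfolding rdvd_def using \<open>q \<in> R\<close> by blast
  qed
  then show ?thesis
    using g(1) by blast
qed

lemma gcd_in_rspan:
  assumes "finite S" "S \<subseteq> R" "is_gcd_in R S d"
  shows "d \<in> rspan R S"
proof -
  obtain g where "g \<in> rspan R S" "\<forall>s\<in>S. rdvd R g s"
    using rspan_common_divisor assms(1,2) by blast
  moreover have "g \<in> R"
    using \<open>g \<in> rspan R S\<close> rspan_subset[OF assms(2)] by blast
  ultimately obtain u where "u \<in> R" "d = g * u"
    using assms(3) unfolding is_gcd_in_def rdvd_def by blast
  then show ?thesis
    using rspan_mult \<open>g \<in> rspan R S\<close> by (simp add: mult.commute)
qed

lemma rdvd_minor_mult_cnj_minor: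
  fixes a1 a2 x y :: "complex ^ 4"
  assumes "\<forall>i. a1 $ i \<in> R" "\<forall>i. a2 $ i \<in> R" "\<forall>i. x $ i \<in> R" "\<forall>i. y $ i \<in> R"
    and "hprod a1 x = 0" "hprod a2 x = 0" "hprod a1 y = 0" "hprod a2 y = 0"
    and "hprod a1 a1 = l" "hprod a2 a2 = l" "hprod a1 a2 = 0"
  shows "rdvd R l (minor (($) a1) (($) a2) a b * cnj (minor (($) a1) (($) a2) e f) * hprod y x)"
proof -
  define b1 b2 z where "b1 i = cnj (a1 $ i)" and "b2 i = cnj (a2 $ i)" and "z i = cnj (y $ i)" for i
  define t M \<delta> where "t = (\<Sum>i\<in>UNIV. z i * x $ i)" and "M = compl_proj l (($) a1) b1 (($) a2) b2"
    and "\<delta> = (\<lambda>i j :: 4. if i = j then 1 else (0::complex))"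
  define E where "E = l * t * minor2 \<delta> a b e f - t * mixed_minor2 \<delta> M a b e f
    + mixed_minor2 M (\<lambda>i j. x $ i * z j) a b e f"
  have cnj_hprod: "cnj (hprod v w) = (\<Sum>i\<in>UNIV. v $ i * cnj (w $ i))" for v w :: "complex ^ 4"
    unfolding hprod_def by (simp add: mult.commute)
  have "biorthogonal_4 (($) a1) (($) a2) b1 b2 (($) x) z l"
    using assms(5-11) cnj_hprod[of a1 y] cnj_hprod[of a2 y] cnj_hprod[of a1 a2]
    unfolding biorthogonal_4_def b1_def b2_def z_def hprod_def by simp
  then have identity: "minor (($) a1) (($) a2) a b * minor b1 b2 e f * t = l * E"
    unfolding E_def t_def M_def \<delta>_def by (rule biorthogonal_4.minor_mult_minor_mult_trace)
  have "l \<in> R"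
    using assms(1,9) unfolding hprod_def by auto
  have "hprod y x \<in> R"
    using assms(3,4) unfolding hprod_def by auto
  then have "E \<in> R"
    using \<open>l \<in> R\<close> assms(1-4)
    unfolding E_def t_def M_def \<delta>_def minor2_def mixed_minor2_def compl_proj_def b1_def b2_def z_def hprod_def
    by (auto split: if_split)
  moreover have "cnj (minor (($) a1) (($) a2) e f) = minor b1 b2 e f"
    unfolding minor_def b1_def b2_def by simp
  moreover have "hprod y x = t"
    unfolding hprod_def t_def z_def ..
  ultimately show ?thesis
    using identity unfolding rdvd_def by auto
qed

end

theorem mainTheorem18:
  fixes R :: "complex set" and a1 a2 :: "complex ^ 4" and lam :: real
  assumes "R = ZZ_ring \<or> R = gauss_ring"
    and "\<forall>i. a1 $ i \<in> R" and "\<forall>i. a2 $ i \<in> R"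
    and "icube2 lam a1 a2"
  shows "\<forall>x y d. (\<forall>i. x $ i \<in> R) \<and> hprod a1 x = 0 \<and> hprod a2 x = 0 \<and>
           (\<forall>i. y $ i \<in> R) \<and> hprod a1 y = 0 \<and> hprod a2 y = 0 \<and>
           is_gcd_in R (minors2 a1 a2) d \<longrightarrow>
           rdvd R (complex_of_real lam) (complex_of_real ((cmod d)\<^sup>2) * hprod y x)"
proof (intro allI impI, elim conjE)
  fix x y d
  assume x: "\<forall>i. x $ i \<in> R" "hprod a1 x = 0" "hprod a2 x = 0"
    and y: "\<forall>i. y $ i \<in> R" "hprod a1 y = 0" "hprod a2 y = 0"
    and gcd: "is_gcd_in R (minors2 a1 a2) d"
  have R: "int_or_gauss R"
    using assms(1) unfolding int_or_gauss_def .
  have A: "hprod a1 a1 = of_real lam" "hprod a2 a2 = of_real lam" "hprod a1 a2 = 0"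
    using assms(4) unfolding icube2_def by auto
  let ?S = "minors2 a1 a2"
  have S_eq: "?S = (\<lambda>(i, j). minor (($) a1) (($) a2) i j) ` {(i, j). i < j}"
    unfolding minors2_def minor_def by auto
  have "finite ?S" "?S \<subseteq> R"
    unfolding S_eq minor_def using assms(2,3) by (auto simp: int_or_gauss_closed[OF R])
  then obtain c where c: "\<forall>s. c s \<in> R" "d = (\<Sum>s\<in>?S. c s * s)"
    using gcd_in_rspan[OF R _ _ gcd] unfolding rspan_def by auto
  have div: "rdvd R (of_real lam) (s * cnj s' * hprod y x)" if "s \<in> ?S" "s' \<in> ?S" for s s'
    using that rdvd_minor_mult_cnj_minor[OF R assms(2,3) x(1) y(1) x(2,3) y(2,3) A]
    unfolding S_eq by auto
  have "complex_of_real ((cmod d)\<^sup>2) * hprod y x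
      = (\<Sum>s\<in>?S. c s * s) * (\<Sum>s'\<in>?S. cnj (c s') * cnj s') * hprod y x"
    unfolding complex_norm_square c(2) by simp
  also have "\<dots> = (\<Sum>s\<in>?S. \<Sum>s'\<in>?S. c s * s * (cnj (c s') * cnj s') * hprod y x)"
    unfolding sum_product by (simp only: sum_distrib_right)
  also have "\<dots> = (\<Sum>s\<in>?S. \<Sum>s'\<in>?S. (c s * cnj (c s')) * (s * cnj s' * hprod y x))"
    by (simp only: mult_ac)
  finally show "rdvd R (of_real lam) (complex_of_real ((cmod d)\<^sup>2) * hprod y x)"
    using div c(1) by (simp add: rdvd_sum[OF R] rdvd_mult_left[OF R] int_or_gauss_closed[OF R])
qed

end
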